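(* Let $\|\cdot\|_\alpha$ be a submultiplicative norm from a dimension-invariant family, and let $A$ be an $n\times n$ matrix with a blocking of $n_t$ blocks that is strictly block diagonally dominant by columns, i.e. each $A_{j,j}$ is nonsingular and $\sum_{i\ne j}\|A_{i,j}\|_\alpha<\|A_{j,j}^{-1}\|_\alpha^{-1}$ for all $1\le j\le n_t$ (or strictly block diagonally dominant by rows, i.e. $\sum_{j\ne i}\|A_{i,j}\|_\alpha<\|A_{i,i}^{-1}\|_\alpha^{-1}$ for all $i$). Then $A$ is block strongly nonsingular and the block-sum growth factor satisfies $\rho_{\Sigma\alpha}=\max_{1\le k\le n_t}\|A^{(k)}\|_{\Sigma\alpha}/\|A\|_{\Sigma\alpha}=1$.
   Context: A dimension-invariant family of matrix norms: for every matrix $B$ and every contiguous block partition, $\max_{i,j}\|B_{i,j}\|\le\|B\|\le\sum_{i,j}\|B_{i,j}\|$. Blocking: a strictly increasing list $[1=\mathcal{I}_1<\dots<\mathcal{I}_{n_t+1}=n+1]$ defining blocks $A_{i,j}$. Block strongly nonsingular: all $A_{1:k,1:k}$ nonsingular. Block Schur complements: $A^{(1)}=A$, $A^{(k+1)}=A^{(k)}_{k+1:n_t,k+1:n_t}-A^{(k)}_{k+1:n_t,k}(A^{(k)}_{k,k})^{-1}A^{(k)}_{k,k+1:n_t}$ (blocks indexed $k+1,\dots,n_t$). Block-sum norm: $\|B\|_{\Sigma\alpha}=\sum_{i,j}\|B_{ij}\|_\alpha$ over the blocks of $B$. *)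

theory Defs
  imports Complex_Main "Jordan_Normal_Form.Matrix"
begin

definition mat_norm_family :: "('a::real_normed_field mat \<Rightarrow> real) \<Rightarrow> bool" where
  "mat_norm_family N \<longleftrightarrow>
     (\<forall>B. 0 \<le> N B) \<and>
     (\<forall>B. N B = 0 \<longleftrightarrow> B = 0\<^sub>m (dim_row B) (dim_col B)) \<and>
     (\<forall>c B. N (c \<cdot>\<^sub>m B) = norm c * N B) \<and>
     (\<forall>B C. dim_row B = dim_row C \<longrightarrow> dim_col B = dim_col C \<longrightarrow> N (B + C) \<le> N B + N C)"

definition submultiplicative :: "('a::real_normed_field mat \<Rightarrow> real) \<Rightarrow> bool" where
  "submultiplicative N \<longleftrightarrow> (\<forall>X Y. dim_col X = dim_row Y \<longrightarrow> N (X * Y) \<le> N X * N Y)"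

text \<open>A contiguous partition of {0..<m} given by 0 = P!0 < P!1 < ... < last P = m
  (0-based version of the paper's 1 = I_1 < ... < I_{n_t+1} = m+1).\<close>
definition partition_of :: "nat list \<Rightarrow> nat \<Rightarrow> bool" where
  "partition_of P m \<longleftrightarrow> 2 \<le> length P \<and> sorted_wrt (<) P \<and> hd P = 0 \<and> last P = m"

definition nblocks :: "nat list \<Rightarrow> nat" where
  "nblocks P = length P - 1"

definition blk :: "'a mat \<Rightarrow> nat list \<Rightarrow> nat list \<Rightarrow> nat \<Rightarrow> nat \<Rightarrow> 'a mat" where
  "blk B R C i j = mat (R ! Suc i - R ! i) (C ! Suc j - C ! j) (\<lambda>(r, c). B $$ (R ! i + r, C ! j + c))"

definition dimension_invariant :: "('a::real_normed_field mat \<Rightarrow> real) \<Rightarrow> bool" where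
  "dimension_invariant N \<longleftrightarrow>
     (\<forall>B R C. partition_of R (dim_row B) \<longrightarrow> partition_of C (dim_col B) \<longrightarrow>
        (\<forall>i < nblocks R. \<forall>j < nblocks C. N (blk B R C i j) \<le> N B) \<and>
        N B \<le> (\<Sum>i < nblocks R. \<Sum>j < nblocks C. N (blk B R C i j)))"

definition mat_inv :: "'a::field mat \<Rightarrow> 'a mat" where
  "mat_inv A = (SOME B. inverts_mat A B \<and> inverts_mat B A)"

definition lead :: "'a mat \<Rightarrow> nat \<Rightarrow> 'a mat" where
  "lead A m = mat m m (\<lambda>(r, c). A $$ (r, c))"

definition block_strongly_nonsingular :: "'a::field mat \<Rightarrow> nat list \<Rightarrow> bool" where
  "block_strongly_nonsingular A I \<longleftrightarrow> (\<forall>k \<in> {1..nblocks I}. invertible_mat (lead A (I ! k)))"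

text \<open>schur A I k is the paper's A^(k+1): schur A I 0 = A, and each step eliminates
  the leading block (of size I!(k+1) - I!k) of the previous Schur complement.\<close>
fun schur :: "'a::field mat \<Rightarrow> nat list \<Rightarrow> nat \<Rightarrow> 'a mat" where
  "schur A I 0 = A"
| "schur A I (Suc k) =
     (let S = schur A I k; d = I ! Suc k - I ! k in
      case split_block S d d of (S11, S12, S21, S22) \<Rightarrow> S22 - S21 * mat_inv S11 * S12)"

text \<open>The blocking inherited by schur A I k (block indices k+1..n_t of the paper).\<close>
definition shift_blocking :: "nat list \<Rightarrow> nat \<Rightarrow> nat list" where
  "shift_blocking I k = map (\<lambda>x. x - I ! k) (drop k I)"

definition block_sum_norm :: "('a mat \<Rightarrow> real) \<Rightarrow> 'a mat \<Rightarrow> nat list \<Rightarrow> real" where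
  "block_sum_norm N B P = (\<Sum>i < nblocks P. \<Sum>j < nblocks P. N (blk B P P i j))"

definition growth_factor :: "('a::field mat \<Rightarrow> real) \<Rightarrow> 'a mat \<Rightarrow> nat list \<Rightarrow> real" where
  "growth_factor N A I =
     Max {block_sum_norm N (schur A I k) (shift_blocking I k) | k. k < nblocks I}
       / block_sum_norm N A I"

definition block_col_dd :: "('a::field mat \<Rightarrow> real) \<Rightarrow> 'a mat \<Rightarrow> nat list \<Rightarrow> bool" where
  "block_col_dd N A I \<longleftrightarrow> (\<forall>j < nblocks I. invertible_mat (blk A I I j j) \<and>
     (\<Sum>i \<in> {..<nblocks I} - {j}. N (blk A I I i j)) < 1 / N (mat_inv (blk A I I j j)))"

definition block_row_dd :: "('a::field mat \<Rightarrow> real) \<Rightarrow> 'a mat \<Rightarrow> nat list \<Rightarrow> bool" where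
  "block_row_dd N A I \<longleftrightarrow> (\<forall>i < nblocks I. invertible_mat (blk A I I i i) \<and>
     (\<Sum>j \<in> {..<nblocks I} - {i}. N (blk A I I i j)) < 1 / N (mat_inv (blk A I I i i)))"

end

(*
  Eliminating the pivot block B_00 of a blocked matrix B replaces block (i, j) by
  B_ij - B_i0 B_00^-1 B_0j. Under block column dominance the pivot column gives
  ||B_00^-1|| * (sum over i of ||B_i0||) < 1, so the fill-in of column j costs at most ||B_0j||,
  the norm of the block that column j loses (row dominance is symmetric). Combined with the
  perturbation bound 1 / ||(X - E)^-1|| >= 1 / ||X^-1|| - ||E|| for the new diagonal blocks,
  this shows that the Schur complement is again block diagonally dominant and that its
  block-sum norm does not exceed that of B. Hence every A^(k) has block-sum norm at most that
  of A = A^(1), and the growth factor is 1. Leading principal submatrices inherit dominance,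
  and det B = det B_00 * det S yields their invertibility by induction on the number of blocks.
*)

theory Submission
  imports Defs "Jordan_Normal_Form.Determinant"
begin

section \<open>Inverses and Schur complements\<close>

lemma invertible_mat_inv:
  fixes B :: "'a::field mat"
  assumes B: "B \<in> carrier_mat q q" and "invertible_mat B"
  shows "mat_inv B \<in> carrier_mat q q" "B * mat_inv B = 1\<^sub>m q" "mat_inv B * B = 1\<^sub>m q"
proof -
  have "inverts_mat B (mat_inv B) \<and> inverts_mat (mat_inv B) B"
    using someI_ex[of "\<lambda>C. inverts_mat B C \<and> inverts_mat C B"] assms(2)
    unfolding mat_inv_def invertible_mat_def by blast
  then have right: "B * mat_inv B = 1\<^sub>m q" and left: "mat_inv B * B = 1\<^sub>m (dim_row (mat_inv B))"
    using B unfolding inverts_mat_def by auto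
  moreover have "dim_row (mat_inv B) = q" "dim_col (mat_inv B) = q"
    using arg_cong[OF left, of dim_col] arg_cong[OF right, of dim_col] B by auto
  ultimately show "mat_inv B \<in> carrier_mat q q" "B * mat_inv B = 1\<^sub>m q" "mat_inv B * B = 1\<^sub>m q"
    by auto
qed

lemma invertible_mat_iff_det:
  fixes B :: "'a::field mat"
  assumes B: "B \<in> carrier_mat q q"
  shows "invertible_mat B \<longleftrightarrow> det B \<noteq> 0"
proof
  assume "invertible_mat B"
  note inv = invertible_mat_inv[OF B this]
  have "det B * det (mat_inv B) = 1"
    using det_mult[OF B inv(1)] inv(2) by simp
  then show "det B \<noteq> 0" by auto
next
  assume "det B \<noteq> 0"
  from det_non_zero_imp_unit[OF B this, of "()"]
  obtain C where "C \<in> carrier_mat q q" "B * C = 1\<^sub>m q" "C * B = 1\<^sub>m q"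
    unfolding Units_def ring_mat_def by auto
  then show "invertible_mat B"
    using B unfolding invertible_mat_def inverts_mat_def by auto
qed

lemma left_inverse_diff_mult:
  fixes X :: "'a::comm_ring_1 mat"
  assumes X: "X \<in> carrier_mat q q" and E: "E \<in> carrier_mat q q" and V: "V \<in> carrier_mat q p"
    and Xi: "Xi \<in> carrier_mat q q" "Xi * X = 1\<^sub>m q"
  shows "Xi * ((X - E) * V) + Xi * (E * V) = V"
proof -
  have XE: "X - E \<in> carrier_mat q q" using E by (rule minus_carrier_mat)
  have "(X - E) * V + E * V = (X - E + E) * V"
    using XE E V by (rule add_mult_distrib_mat[symmetric])
  also have "X - E + E = X" using X E by (intro eq_matI) auto
  finally have split: "(X - E) * V + E * V = X * V" .
  have "Xi * ((X - E) * V) + Xi * (E * V) = Xi * ((X - E) * V + E * V)"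
    by (rule mult_add_distrib_mat[symmetric, OF Xi(1) mult_carrier_mat[OF XE V] mult_carrier_mat[OF E V]])
  also have "\<dots> = V" unfolding split using X V Xi by (simp add: assoc_mult_mat[symmetric, of Xi q q])
  finally show ?thesis .
qed

definition schur_complement :: "'a::field mat \<Rightarrow> nat \<Rightarrow> 'a mat" where
  "schur_complement B d =
     (case split_block B d d of (B11, B12, B21, B22) \<Rightarrow> B22 - B21 * mat_inv B11 * B12)"

lemma schur_Suc: "schur A I (Suc k) = schur_complement (schur A I k) (I ! Suc k - I ! k)"
  by (simp add: schur_complement_def Let_def)

lemma split_block_lead: "split_block B d d = (B11, B12, B21, B22) \<Longrightarrow> B11 = lead B d"
  unfolding split_block_def lead_def Let_def by auto

lemma schur_complement_carrier:
  "B \<in> carrier_mat m m \<Longrightarrow> schur_complement B d \<in> carrier_mat (m - d) (m - d)"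
  unfolding schur_complement_def split_block_def Let_def by auto

lemma det_schur_complement:
  fixes B :: "'a::field mat"
  assumes B: "B \<in> carrier_mat m m" and "d \<le> m" and inv: "invertible_mat (lead B d)"
  shows "det B = det (lead B d) * det (schur_complement B d)"
proof -
  obtain B11 B12 B21 B22 where sp: "split_block B d d = (B11, B12, B21, B22)"
    by (cases "split_block B d d") auto
  have "dim_row B = d + (m - d)" "dim_col B = d + (m - d)" using B \<open>d \<le> m\<close> by auto
  note blocks = split_block[OF sp this]
  define X where "X = mat_inv B11"
  define S where "S = B22 - B21 * X * B12"
  have S_eq: "schur_complement B d = S" and B11: "B11 = lead B d"
    using sp split_block_lead[OF sp] unfolding schur_complement_def S_def X_def by auto
  note X = invertible_mat_inv[OF blocks(1) inv[folded B11], folded X_def]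
  have S: "S \<in> carrier_mat (m - d) (m - d)" unfolding S_def using blocks X by auto
  define L where "L = four_block_mat (1\<^sub>m d) (0\<^sub>m d (m - d)) (B21 * X) (1\<^sub>m (m - d))"
  define U where "U = four_block_mat B11 B12 (0\<^sub>m (m - d) d) S"
  have L: "L \<in> carrier_mat m m" and U: "U \<in> carrier_mat m m"
    unfolding L_def U_def using blocks X S \<open>d \<le> m\<close>
    by (auto intro!: four_block_carrier_mat[of _ d d _ "m - d" "m - d", simplified])
  have "B21 * X * B11 = B21" using blocks X by (simp add: assoc_mult_mat[of _ "m - d" d _ d _ d])
  moreover have "B21 * X * B12 + S = B22"
    unfolding S_def by (rule eq_matI) (use blocks X in auto)
  ultimately have "L * U = B"
    unfolding L_def U_def using blocks X S by (subst mult_four_block_mat) auto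
  moreover have "det L = 1" unfolding L_def
    by (subst det_four_block_mat_upper_right_zero[of _ d _ "m - d"]) (use blocks X in auto)
  moreover have "det U = det B11 * det S" unfolding U_def
    by (rule det_four_block_mat_lower_left_zero[OF blocks(1,2) refl S])
  ultimately show ?thesis using det_mult[OF L U] S_eq B11 by simp
qed

section \<open>Blockings\<close>

lemma partition_of_less: "partition_of P m \<Longrightarrow> i < j \<Longrightarrow> j < length P \<Longrightarrow> P ! i < P ! j"
  unfolding partition_of_def by (auto simp: sorted_wrt_iff_nth_less)

lemma partition_of_mono: "partition_of P m \<Longrightarrow> i \<le> j \<Longrightarrow> j < length P \<Longrightarrow> P ! i \<le> P ! j"
  using partition_of_less[of P m i j] by (cases "i = j") auto

lemma length_partition: "partition_of P m \<Longrightarrow> length P = Suc (nblocks P)"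
  unfolding partition_of_def nblocks_def by auto

lemma nblocks_pos: "partition_of P m \<Longrightarrow> 0 < nblocks P"
  unfolding partition_of_def nblocks_def by auto

lemma partition_of_nth_0: "partition_of P m \<Longrightarrow> P ! 0 = 0"
  unfolding partition_of_def using hd_conv_nth[of P] by (cases P) auto

lemma partition_of_nth_nblocks: "partition_of P m \<Longrightarrow> P ! nblocks P = m"
  unfolding partition_of_def nblocks_def using last_conv_nth[of P] by (cases P) auto

lemma partition_of_nth_le: "partition_of P m \<Longrightarrow> i < length P \<Longrightarrow> P ! i \<le> m"
  using partition_of_mono[of P m i "nblocks P"] partition_of_nth_nblocks[of P m]
    length_partition[of P m] by auto

lemma block_size_pos: "partition_of P m \<Longrightarrow> i < nblocks P \<Longrightarrow> 0 < P ! Suc i - P ! i"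
  using partition_of_less[of P m i "Suc i"] length_partition[of P m] by auto

definition tail_blocking :: "nat list \<Rightarrow> nat list" where
  "tail_blocking P = map (\<lambda>x. x - P ! 1) (tl P)"

lemma nblocks_tail_blocking: "nblocks (tail_blocking P) = nblocks P - 1"
  unfolding tail_blocking_def nblocks_def by simp

lemma tail_blocking_nth: "i < nblocks P \<Longrightarrow> tail_blocking P ! i = P ! Suc i - P ! 1"
  unfolding tail_blocking_def nblocks_def by (simp add: nth_tl)

lemma partition_of_tail_blocking:
  assumes P: "partition_of P m" and "2 \<le> nblocks P"
  shows "partition_of (tail_blocking P) (m - P ! 1)"
  unfolding partition_of_def
proof (intro conjI)
  have len: "length (tail_blocking P) = nblocks P"
    unfolding tail_blocking_def nblocks_def by simp
  have nth: "tail_blocking P ! i = P ! Suc i - P ! 1" if "i < nblocks P" for i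
    using tail_blocking_nth[OF that] .
  have ge: "P ! 1 \<le> P ! Suc i" if "i < nblocks P" for i
    using partition_of_mono[OF P, of 1 "Suc i"] that length_partition[OF P] by simp
  show "2 \<le> length (tail_blocking P)" using len \<open>2 \<le> nblocks P\<close> by simp
  show "sorted_wrt (<) (tail_blocking P)"
    unfolding sorted_wrt_iff_nth_less len
  proof (intro allI impI)
    fix i j assume "i < j" "j < nblocks P"
    then show "tail_blocking P ! i < tail_blocking P ! j"
      using nth ge[of i] partition_of_less[OF P, of "Suc i" "Suc j"] length_partition[OF P] by auto
  qed
  have ne: "tail_blocking P \<noteq> []" using len \<open>2 \<le> nblocks P\<close> by auto
  show "hd (tail_blocking P) = 0"
    using hd_conv_nth[OF ne] nth[of 0] \<open>2 \<le> nblocks P\<close> by simp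
  show "last (tail_blocking P) = m - P ! 1"
    using last_conv_nth[OF ne] nth[of "nblocks P - 1"] len \<open>2 \<le> nblocks P\<close>
      partition_of_nth_nblocks[OF P] by auto
qed

lemma shift_blocking_0: "partition_of I n \<Longrightarrow> shift_blocking I 0 = I"
  unfolding shift_blocking_def by (simp add: partition_of_nth_0)

lemma shift_blocking_nth_1: "Suc k < length I \<Longrightarrow> shift_blocking I k ! 1 = I ! Suc k - I ! k"
  unfolding shift_blocking_def using nth_drop[of k I 1] by simp

lemma shift_blocking_Suc:
  assumes I: "partition_of I n" and k: "Suc k < length I"
  shows "shift_blocking I (Suc k) = tail_blocking (shift_blocking I k)"
proof (rule nth_equalityI)
  show "length (shift_blocking I (Suc k)) = length (tail_blocking (shift_blocking I k))"
    unfolding shift_blocking_def tail_blocking_def by simp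
  fix i assume "i < length (shift_blocking I (Suc k))"
  then have i: "Suc k + i < length I" unfolding shift_blocking_def by simp
  have "I ! k \<le> I ! Suc k" "I ! Suc k \<le> I ! (Suc k + i)"
    using partition_of_mono[OF I] i by auto
  then show "shift_blocking I (Suc k) ! i = tail_blocking (shift_blocking I k) ! i"
    using i k nth_drop[of k I "Suc i"] unfolding shift_blocking_def tail_blocking_def by (simp add: nth_tl)
qed

lemma blk_carrier: "blk B R C i j \<in> carrier_mat (R ! Suc i - R ! i) (C ! Suc j - C ! j)"
  unfolding blk_def by auto

lemma blk_index: "r < R ! Suc i - R ! i \<Longrightarrow> c < C ! Suc j - C ! j \<Longrightarrow>
    blk B R C i j $$ (r, c) = B $$ (R ! i + r, C ! j + c)"
  unfolding blk_def by auto

lemma lead_carrier: "lead A k \<in> carrier_mat k k"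
  unfolding lead_def by simp

lemma blk_0_0_eq_lead: "partition_of P m \<Longrightarrow> blk B P P 0 0 = lead B (P ! 1)"
  unfolding blk_def lead_def by (simp add: partition_of_nth_0)

lemma blk_single_block:
  "partition_of P m \<Longrightarrow> nblocks P = 1 \<Longrightarrow> B \<in> carrier_mat m m \<Longrightarrow> blk B P P 0 0 = B"
  using partition_of_nth_nblocks[of P m] unfolding blk_def
  by (intro eq_matI) (auto simp: partition_of_nth_0)

lemma blk_schur_complement:
  fixes B :: "'a::field mat"
  assumes B: "B \<in> carrier_mat m m" and P: "partition_of P m" and inv: "invertible_mat (blk B P P 0 0)"
    and i: "Suc i < nblocks P" and j: "Suc j < nblocks P"
  shows "blk (schur_complement B (P ! 1)) (tail_blocking P) (tail_blocking P) i j
    = blk B P P (Suc i) (Suc j) - blk B P P (Suc i) 0 * mat_inv (blk B P P 0 0) * blk B P P 0 (Suc j)"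
    (is "?S = _")
proof -
  define d where "d = P ! 1"
  define X where "X = mat_inv (blk B P P 0 0)"
  have X: "X \<in> carrier_mat d d"
    using invertible_mat_inv(1)[OF blk_carrier inv] partition_of_nth_0[OF P] unfolding X_def d_def by simp
  have X_lead: "X = mat_inv (mat d d (($$) B))"
    using blk_0_0_eq_lead[OF P, of B] unfolding X_def d_def lead_def by simp
  have lenP: "length P = Suc (nblocks P)" by (rule length_partition[OF P])
  have d: "d \<le> P ! Suc i" "d \<le> P ! Suc j" unfolding d_def using partition_of_mono[OF P] i j lenP by auto
  have bound: "P ! Suc (Suc i) \<le> m" "P ! Suc (Suc j) \<le> m" using partition_of_nth_le[OF P] i j lenP by auto
  have S: "schur_complement B d $$ (a, b) = B $$ (a + d, b + d)
      - (\<Sum>k = 0..<d. (\<Sum>l = 0..<d. B $$ (a + d, l) * X $$ (l, k)) * B $$ (k, b + d))"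
    if "a < m - d" "b < m - d" for a b
    using that B X unfolding schur_complement_def split_block_def Let_def
    by (simp add: scalar_prod_def X_lead[symmetric])
  show ?thesis
    unfolding X_def[symmetric]
  proof (rule eq_matI)
    fix r c assume "r < dim_row (blk B P P (Suc i) (Suc j) - blk B P P (Suc i) 0 * X * blk B P P 0 (Suc j))"
      "c < dim_col (blk B P P (Suc i) (Suc j) - blk B P P (Suc i) 0 * X * blk B P P 0 (Suc j))"
    then have r: "r < P ! Suc (Suc i) - P ! Suc i" and c: "c < P ! Suc (Suc j) - P ! Suc j"
      by (simp_all add: blk_def)
    have "?S $$ (r, c) = schur_complement B d $$ (P ! Suc i - d + r, P ! Suc j - d + c)"
      using r c i j d unfolding d_def by (subst blk_index) (auto simp: tail_blocking_nth)
    also have "\<dots> = B $$ (P ! Suc i + r, P ! Suc j + c)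
      - (\<Sum>k = 0..<d. (\<Sum>l = 0..<d. B $$ (P ! Suc i + r, l) * X $$ (l, k)) * B $$ (k, P ! Suc j + c))"
      using r c d bound by (subst S) auto
    also have "\<dots> = (blk B P P (Suc i) (Suc j) - blk B P P (Suc i) 0 * X * blk B P P 0 (Suc j)) $$ (r, c)"
      using r c X unfolding d_def
      by (simp add: blk_def scalar_prod_def partition_of_nth_0[OF P])
    finally show "?S $$ (r, c) = \<dots>" .
  qed (use i j d partition_of_mono[OF P, of "Suc i" "Suc (Suc i)"]
      partition_of_mono[OF P, of "Suc j" "Suc (Suc j)"] lenP in \<open>auto simp: blk_def tail_blocking_nth d_def\<close>)
qed

lemma nblocks_shift_blocking: "nblocks (shift_blocking I k) = nblocks I - k"
  unfolding shift_blocking_def nblocks_def by simp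

lemma nblocks_take: "k < length I \<Longrightarrow> nblocks (take (Suc k) I) = k"
  unfolding nblocks_def by (cases I) auto

lemma partition_of_take:
  assumes I: "partition_of I n" and k: "1 \<le> k" "k \<le> nblocks I"
  shows "partition_of (take (Suc k) I) (I ! k)"
proof -
  have k_len: "k < length I" using k length_partition[OF I] by simp
  then have "I \<noteq> []" and ne: "take (Suc k) I \<noteq> []" by auto
  then show ?thesis
    using I k k_len hd_conv_nth[OF ne] last_conv_nth[OF ne] partition_of_nth_0[OF I]
    by (auto simp: partition_of_def sorted_wrt_take)
qed

lemma blk_lead:
  assumes I: "partition_of I n" and "i < k" "j < k" "k \<le> nblocks I"
  shows "blk (lead A (I ! k)) (take (Suc k) I) (take (Suc k) I) i j = blk A I I i j"
proof -
  have "I ! Suc i \<le> I ! k" "I ! Suc j \<le> I ! k"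
    using partition_of_mono[OF I] length_partition[OF I] assms by auto
  then show ?thesis using assms unfolding blk_def lead_def by (intro eq_matI) auto
qed

section \<open>Perturbation of the inverse\<close>

locale submultiplicative_norm_family =
  fixes N :: "'a::real_normed_field mat \<Rightarrow> real"
  assumes norm_family: "mat_norm_family N" and submult: "submultiplicative N"
begin

lemma N_nonneg: "0 \<le> N B"
  using norm_family unfolding mat_norm_family_def by auto

lemma N_pos: "B \<noteq> 0\<^sub>m (dim_row B) (dim_col B) \<Longrightarrow> 0 < N B"
  using norm_family N_nonneg unfolding mat_norm_family_def by (metis order_le_less)

lemma N_mult: "dim_col X = dim_row Y \<Longrightarrow> N (X * Y) \<le> N X * N Y"
  using submult unfolding submultiplicative_def by auto

lemma N_mult3:
  assumes "dim_col X = dim_row Y" "dim_col Y = dim_row Z"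
  shows "N (X * Y * Z) \<le> N X * N Y * N Z"
proof -
  have "N (X * Y * Z) \<le> N (X * Y) * N Z" using assms by (intro N_mult) simp
  also have "\<dots> \<le> N X * N Y * N Z" using N_mult[OF assms(1)] N_nonneg by (rule mult_right_mono)
  finally show ?thesis .
qed

lemma N_mult_mult_le:
  assumes "X \<in> carrier_mat q q" "E \<in> carrier_mat q q" "V \<in> carrier_mat q p"
  shows "N (X * (E * V)) \<le> N X * (N E * N V)"
proof -
  have "N (X * (E * V)) \<le> N X * N (E * V)" using assms by (intro N_mult) simp
  also have "\<dots> \<le> N X * (N E * N V)" using assms by (intro mult_left_mono N_mult N_nonneg) simp
  finally show ?thesis .
qed

lemma N_add: "dim_row B = dim_row C \<Longrightarrow> dim_col B = dim_col C \<Longrightarrow> N (B + C) \<le> N B + N C"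
  using norm_family unfolding mat_norm_family_def by auto

lemma N_diff:
  assumes "dim_row B = dim_row C" "dim_col B = dim_col C"
  shows "N (B - C) \<le> N B + N C"
proof -
  have "B - C = B + (-1) \<cdot>\<^sub>m C" using assms by (intro eq_matI) auto
  moreover have "N ((-1) \<cdot>\<^sub>m C) = N C"
    using norm_family unfolding mat_norm_family_def by simp
  ultimately show ?thesis using N_add[of B "(-1) \<cdot>\<^sub>m C"] assms by simp
qed

lemma N_factors_of_one_pos:
  assumes X: "X \<in> carrier_mat q q" and Y: "Y \<in> carrier_mat q q"
    and XY: "X * Y = 1\<^sub>m q" and "0 < q"
  shows "0 < N X" "0 < N Y"
proof -
  have "(1\<^sub>m q :: 'a mat) $$ (0, 0) \<noteq> 0\<^sub>m q q $$ (0, 0)" using \<open>0 < q\<close> by simp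
  then have "X * Y \<noteq> 0\<^sub>m q q" unfolding XY by metis
  then have "X \<noteq> 0\<^sub>m q q" "Y \<noteq> 0\<^sub>m q q"
    using left_mult_zero_mat[OF Y] right_mult_zero_mat[OF X] by auto
  then show "0 < N X" "0 < N Y" using X Y by (auto intro: N_pos)
qed

lemma N_invertible_pos:
  assumes "B \<in> carrier_mat q q" "invertible_mat B" "0 < q"
  shows "0 < N B" "0 < N (mat_inv B)"
  using N_factors_of_one_pos[OF assms(1) invertible_mat_inv(1,2)[OF assms(1,2)] assms(3)] by auto

lemma invertible_diff_inverse_bound:
  assumes X: "X \<in> carrier_mat q q" and inv: "invertible_mat X" and "0 < q"
    and E: "E \<in> carrier_mat q q" and small: "N E < 1 / N (mat_inv X)"
  shows "invertible_mat (X - E)" "1 / N (mat_inv X) - N E \<le> 1 / N (mat_inv (X - E))"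
proof -
  define Xi where "Xi = mat_inv X"
  note Xi = invertible_mat_inv[OF X inv, folded Xi_def]
  have Xi_pos: "0 < N Xi" using N_invertible_pos[OF X inv \<open>0 < q\<close>] Xi_def by simp
  have contraction: "N Xi * N E < 1" using small Xi_pos by (simp add: Xi_def field_simps)
  have XE: "X - E \<in> carrier_mat q q" using E by (rule minus_carrier_mat)
  show inv_XE: "invertible_mat (X - E)"
  proof (rule ccontr)
    assume "\<not> invertible_mat (X - E)"
    then obtain v where v: "v \<in> carrier_vec q" "v \<noteq> 0\<^sub>v q" "(X - E) *\<^sub>v v = 0\<^sub>v q"
      using invertible_mat_iff_det[OF XE] det_0_iff_vec_prod_zero_field[OF XE] by auto
    \<comment> \<open>\<open>N\<close> only measures matrices, so the kernel vector is used as a one-column matrix.\<close>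
    define V where "V = mat_of_cols q [v]"
    have V: "V \<in> carrier_mat q 1" using mat_of_cols_carrier(1)[of q "[v]"] unfolding V_def by simp
    have "(X - E) * V = 0\<^sub>m q 1"
    proof (rule mat_col_eqI)
      fix j assume "j < dim_col (0\<^sub>m q 1 :: 'a mat)"
      then show "col ((X - E) * V) j = col (0\<^sub>m q 1) j"
        using v(1,3) col_mult2[OF XE V, of 0] unfolding V_def by simp
    qed (use XE V in auto)
    then have "Xi * (E * V) = V"
      using left_inverse_diff_mult[OF X E V Xi(1,3)] Xi(1) V E by simp
    have "N V \<le> N Xi * (N E * N V)"
      using N_mult_mult_le[OF Xi(1) E V] \<open>Xi * (E * V) = V\<close> by simp
    moreover have "0 < N V"
    proof (rule N_pos)
      have "\<exists>i<q. v $ i \<noteq> 0"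
      proof (rule ccontr)
        assume "\<not> (\<exists>i<q. v $ i \<noteq> 0)"
        then have "v = 0\<^sub>v q" using v(1) by (intro eq_vecI) auto
        then show False using v(2) by simp
      qed
      then obtain i where "i < q" "v $ i \<noteq> 0" by blast
      then have "V $$ (i, 0) \<noteq> 0\<^sub>m q 1 $$ (i, 0)"
        unfolding V_def by (simp add: mat_of_cols_index)
      then show "V \<noteq> 0\<^sub>m (dim_row V) (dim_col V)" using V by auto
    qed
    ultimately show False using contraction by (simp add: mult.assoc[symmetric] mult_le_cancel_right1)
  qed
  define Y where "Y = mat_inv (X - E)"
  note Y = invertible_mat_inv[OF XE inv_XE, folded Y_def]
  have Y_pos: "0 < N Y" using N_invertible_pos[OF XE inv_XE \<open>0 < q\<close>] Y_def by simp
  have "Xi + Xi * (E * Y) = Y"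
    using left_inverse_diff_mult[OF X E Y(1) Xi(1,3)] Y(2) Xi(1) by simp
  then have "N Y \<le> N Xi + N (Xi * (E * Y))"
    using N_add[of Xi "Xi * (E * Y)"] Xi(1) E Y(1) by simp
  also have "\<dots> \<le> N Xi + N Xi * (N E * N Y)"
    using N_mult_mult_le[OF Xi(1) E Y(1)] by simp
  finally have "N Y * (1 - N Xi * N E) \<le> N Xi" by (simp add: algebra_simps)
  then show "1 / N (mat_inv X) - N E \<le> 1 / N (mat_inv (X - E))"
    using Xi_pos Y_pos unfolding Xi_def[symmetric] Y_def[symmetric] by (simp add: field_simps)
qed

end

section \<open>One step of block elimination\<close>

lemma sum_lessThan_Suc_remove_Suc:
  fixes f :: "nat \<Rightarrow> 'b::ab_group_add"
  assumes "j < K"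
  shows "(\<Sum>i\<in>{..<Suc K} - {Suc j}. f i) = f 0 + (\<Sum>i\<in>{..<K} - {j}. f (Suc i))"
  using assms by (simp add: sum_diff1 sum.lessThan_Suc_shift del: sum.lessThan_Suc)

lemma sum_lessThan_Suc_remove_0:
  fixes f :: "nat \<Rightarrow> 'b::ab_group_add"
  shows "(\<Sum>i\<in>{..<Suc K} - {0}. f i) = (\<Sum>i<K. f (Suc i))"
  by (simp add: sum_diff1 sum.lessThan_Suc_shift del: sum.lessThan_Suc)

lemma off_diagonal_sum_after_elimination:
  fixes b :: "nat \<Rightarrow> nat \<Rightarrow> real"
  assumes b: "\<And>i j. 0 \<le> b i j" and "0 \<le> a" and j: "j < K"
    and pivot: "a * (\<Sum>i<K. b (Suc i) 0) \<le> 1"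
    and column: "(\<Sum>i\<in>{..<Suc K} - {Suc j}. b i (Suc j)) < D"
  shows "(\<Sum>i\<in>{..<K} - {j}. b (Suc i) (Suc j) + b (Suc i) 0 * a * b 0 (Suc j))
    < D - b (Suc j) 0 * a * b 0 (Suc j)"
proof -
  have "(\<Sum>i\<in>{..<K} - {j}. b (Suc i) 0 * a * b 0 (Suc j)) + b (Suc j) 0 * a * b 0 (Suc j)
      = a * (\<Sum>i<K. b (Suc i) 0) * b 0 (Suc j)"
    using j by (simp add: sum_diff1 sum_distrib_left sum_distrib_right mult_ac)
  also have "\<dots> \<le> b 0 (Suc j)"
    by (rule mult_left_le_one_le[OF b _ pivot]) (simp add: b \<open>0 \<le> a\<close> sum_nonneg)
  finally show ?thesis
    using column sum_lessThan_Suc_remove_Suc[OF j, of "\<lambda>i. b i (Suc j)"] by (simp add: sum.distrib)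
qed

lemma block_sum_after_elimination_le:
  fixes b :: "nat \<Rightarrow> nat \<Rightarrow> real"
  assumes b: "\<And>i j. 0 \<le> b i j" and "0 \<le> a"
    and pivot: "a * (\<Sum>i<K. b (Suc i) 0) \<le> 1 \<or> a * (\<Sum>j<K. b 0 (Suc j)) \<le> 1"
  shows "(\<Sum>i<K. \<Sum>j<K. b (Suc i) (Suc j) + b (Suc i) 0 * a * b 0 (Suc j))
    \<le> (\<Sum>i<Suc K. \<Sum>j<Suc K. b i j)"
proof -
  define col where "col = (\<Sum>i<K. b (Suc i) 0)"
  define row where "row = (\<Sum>j<K. b 0 (Suc j))"
  have nonneg: "0 \<le> col" "0 \<le> row" unfolding col_def row_def by (simp_all add: b sum_nonneg)
  have "(\<Sum>i<K. \<Sum>j<K. b (Suc i) 0 * a * b 0 (Suc j)) = (a * col) * row"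
    unfolding col_def row_def by (simp add: sum_distrib_left sum_distrib_right mult_ac)
  also have "\<dots> \<le> row + col"
    using pivot[folded col_def row_def]
  proof
    assume "a * col \<le> 1"
    then have "(a * col) * row \<le> row" using nonneg \<open>0 \<le> a\<close> by (intro mult_left_le_one_le) simp_all
    then show ?thesis using nonneg by linarith
  next
    assume "a * row \<le> 1"
    then have "(a * row) * col \<le> col" using nonneg \<open>0 \<le> a\<close> by (intro mult_left_le_one_le) simp_all
    then show ?thesis using nonneg by (simp add: mult_ac)
  qed
  finally have "(\<Sum>i<K. \<Sum>j<K. b (Suc i) 0 * a * b 0 (Suc j)) \<le> row + col" .
  moreover have "(\<Sum>i<Suc K. \<Sum>j<Suc K. b i j) = b 0 0 + row + col + (\<Sum>i<K. \<Sum>j<K. b (Suc i) (Suc j))"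
    unfolding col_def row_def by (simp add: sum.lessThan_Suc_shift sum.distrib del: sum.lessThan_Suc)
  ultimately show ?thesis using b[of 0 0] by (simp add: sum.distrib)
qed

definition block_diag_dominant :: "('a::field mat \<Rightarrow> real) \<Rightarrow> 'a mat \<Rightarrow> nat list \<Rightarrow> bool" where
  "block_diag_dominant N B P \<longleftrightarrow> block_col_dd N B P \<or> block_row_dd N B P"

lemma block_diag_dominant_pivot_invertible:
  "partition_of P m \<Longrightarrow> block_diag_dominant N B P \<Longrightarrow> invertible_mat (blk B P P 0 0)"
  using nblocks_pos[of P m]
  unfolding block_diag_dominant_def block_col_dd_def block_row_dd_def by auto

text \<open>Blocks are numbered from 0: block 0 is the pivot block \<open>A\<^sub>1\<^sub>1\<close> of the paper.\<close>

locale pivot_elimination = submultiplicative_norm_family N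
  for N :: "'a::real_normed_field mat \<Rightarrow> real" +
  fixes B :: "'a mat" and P :: "nat list" and m :: nat
  assumes B: "B \<in> carrier_mat m m" and P: "partition_of P m"
    and pivot_invertible: "invertible_mat (blk B P P 0 0)"
begin

abbreviation S :: "'a mat" where "S \<equiv> schur_complement B (P ! 1)"

abbreviation P' :: "nat list" where "P' \<equiv> tail_blocking P"

definition b :: "nat \<Rightarrow> nat \<Rightarrow> real" where "b i j = N (blk B P P i j)"

definition a :: real where "a = N (mat_inv (blk B P P 0 0))"

lemma b_nonneg: "0 \<le> b i j"
  unfolding b_def by (rule N_nonneg)

lemma a_pos: "0 < a"
  using N_invertible_pos(2)[OF blk_carrier pivot_invertible block_size_pos[OF P nblocks_pos[OF P]]]
  unfolding a_def by simp

lemma elimination_term_le: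
  "N (blk B P P (Suc i) 0 * mat_inv (blk B P P 0 0) * blk B P P 0 (Suc j)) \<le> b (Suc i) 0 * a * b 0 (Suc j)"
  using invertible_mat_inv(1)[OF blk_carrier pivot_invertible]
  unfolding a_def b_def by (intro N_mult3) (auto simp: blk_def)

lemma norm_blk_schur_complement_le:
  assumes "i < nblocks P - 1" "j < nblocks P - 1"
  shows "N (blk S P' P' i j) \<le> b (Suc i) (Suc j) + b (Suc i) 0 * a * b 0 (Suc j)"
proof -
  have "Suc i < nblocks P" "Suc j < nblocks P" using assms by auto
  note blk_S = blk_schur_complement[OF B P pivot_invertible this]
  have "N (blk S P' P' i j) \<le> b (Suc i) (Suc j)
      + N (blk B P P (Suc i) 0 * mat_inv (blk B P P 0 0) * blk B P P 0 (Suc j))"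
    unfolding blk_S b_def by (intro N_diff) (auto simp: blk_def)
  then show ?thesis using elimination_term_le[of i j] by simp
qed

lemma diagonal_blk_schur_complement:
  assumes j: "j < nblocks P - 1" and Bjj: "invertible_mat (blk B P P (Suc j) (Suc j))"
    and "0 \<le> s" and s: "s < 1 / N (mat_inv (blk B P P (Suc j) (Suc j))) - b (Suc j) 0 * a * b 0 (Suc j)"
  shows "invertible_mat (blk S P' P' j j) \<and> s < 1 / N (mat_inv (blk S P' P' j j))"
proof -
  define E where "E = blk B P P (Suc j) 0 * mat_inv (blk B P P 0 0) * blk B P P 0 (Suc j)"
  define q where "q = P ! Suc (Suc j) - P ! Suc j"
  have E: "E \<in> carrier_mat q q"
    using invertible_mat_inv(1)[OF blk_carrier pivot_invertible]
    unfolding E_def q_def by (auto simp: blk_def)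
  have q: "0 < q" unfolding q_def using block_size_pos[OF P, of "Suc j"] j by simp
  have Bjj_carrier: "blk B P P (Suc j) (Suc j) \<in> carrier_mat q q" unfolding q_def by (rule blk_carrier)
  have S_jj: "blk S P' P' j j = blk B P P (Suc j) (Suc j) - E"
    unfolding E_def using blk_schur_complement[OF B P pivot_invertible, of j j] j by simp
  have NE: "N E \<le> b (Suc j) 0 * a * b 0 (Suc j)" unfolding E_def by (rule elimination_term_le)
  then have "N E < 1 / N (mat_inv (blk B P P (Suc j) (Suc j)))" using s \<open>0 \<le> s\<close> by linarith
  note perturbed = invertible_diff_inverse_bound[OF Bjj_carrier Bjj q E this]
  show ?thesis unfolding S_jj using perturbed NE s by auto
qed

lemma pivot_column_bound:
  assumes "block_col_dd N B P"
  shows "a * (\<Sum>i<nblocks P - 1. b (Suc i) 0) < 1"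
proof -
  obtain K where K: "nblocks P = Suc K" using nblocks_pos[OF P] not0_implies_Suc by blast
  have "(\<Sum>i\<in>{..<nblocks P} - {0}. b i 0) < 1 / a"
    using assms K unfolding block_col_dd_def a_def b_def by auto
  then show ?thesis using a_pos unfolding K by (simp add: sum_lessThan_Suc_remove_0 field_simps)
qed

lemma pivot_row_bound:
  assumes "block_row_dd N B P"
  shows "a * (\<Sum>j<nblocks P - 1. b 0 (Suc j)) < 1"
proof -
  obtain K where K: "nblocks P = Suc K" using nblocks_pos[OF P] not0_implies_Suc by blast
  have "(\<Sum>j\<in>{..<nblocks P} - {0}. b 0 j) < 1 / a"
    using assms K unfolding block_row_dd_def a_def b_def by auto
  then show ?thesis using a_pos unfolding K by (simp add: sum_lessThan_Suc_remove_0 field_simps)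
qed

lemma block_col_dd_schur_complement:
  assumes col: "block_col_dd N B P"
  shows "block_col_dd N S P'"
  unfolding block_col_dd_def nblocks_tail_blocking
proof (intro allI impI)
  fix j assume j: "j < nblocks P - 1"
  obtain K where K: "nblocks P = Suc K" using nblocks_pos[OF P] not0_implies_Suc by blast
  have Bjj: "invertible_mat (blk B P P (Suc j) (Suc j))"
    and column: "(\<Sum>i\<in>{..<Suc K} - {Suc j}. b i (Suc j)) < 1 / N (mat_inv (blk B P P (Suc j) (Suc j)))"
    using col j K unfolding block_col_dd_def b_def by auto
  have "(\<Sum>i\<in>{..<K} - {j}. N (blk S P' P' i j))
      \<le> (\<Sum>i\<in>{..<K} - {j}. b (Suc i) (Suc j) + b (Suc i) 0 * a * b 0 (Suc j))"
    using j K by (intro sum_mono norm_blk_schur_complement_le) auto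
  also have "\<dots> < 1 / N (mat_inv (blk B P P (Suc j) (Suc j))) - b (Suc j) 0 * a * b 0 (Suc j)"
    using j K pivot_column_bound[OF col] a_pos
    by (intro off_diagonal_sum_after_elimination[where b = b, OF b_nonneg _ _ _ column]) auto
  finally have off: "(\<Sum>i\<in>{..<K} - {j}. N (blk S P' P' i j))
      < 1 / N (mat_inv (blk B P P (Suc j) (Suc j))) - b (Suc j) 0 * a * b 0 (Suc j)" .
  show "invertible_mat (blk S P' P' j j) \<and>
      (\<Sum>i\<in>{..<nblocks P - 1} - {j}. N (blk S P' P' i j)) < 1 / N (mat_inv (blk S P' P' j j))"
    using diagonal_blk_schur_complement[OF j Bjj _ off] K by (simp add: sum_nonneg N_nonneg)
qed

lemma block_row_dd_schur_complement:
  assumes row: "block_row_dd N B P"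
  shows "block_row_dd N S P'"
  unfolding block_row_dd_def nblocks_tail_blocking
proof (intro allI impI)
  fix i assume i: "i < nblocks P - 1"
  obtain K where K: "nblocks P = Suc K" using nblocks_pos[OF P] not0_implies_Suc by blast
  have Bii: "invertible_mat (blk B P P (Suc i) (Suc i))"
    and row_i: "(\<Sum>j\<in>{..<Suc K} - {Suc i}. b (Suc i) j) < 1 / N (mat_inv (blk B P P (Suc i) (Suc i)))"
    using row i K unfolding block_row_dd_def b_def by auto
  have "(\<Sum>j\<in>{..<K} - {i}. N (blk S P' P' i j))
      \<le> (\<Sum>j\<in>{..<K} - {i}. b (Suc i) (Suc j) + b 0 (Suc j) * a * b (Suc i) 0)"
    using i K norm_blk_schur_complement_le by (intro sum_mono) (auto simp: mult_ac)
  also have "\<dots> < 1 / N (mat_inv (blk B P P (Suc i) (Suc i))) - b 0 (Suc i) * a * b (Suc i) 0"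
    \<comment> \<open>the column estimate, applied to the transposed array of block norms\<close>
    using i K pivot_row_bound[OF row] a_pos
    by (intro off_diagonal_sum_after_elimination[where b = "\<lambda>k l. b l k", OF b_nonneg _ _ _ row_i]) auto
  also have "\<dots> = 1 / N (mat_inv (blk B P P (Suc i) (Suc i))) - b (Suc i) 0 * a * b 0 (Suc i)"
    by (simp add: mult_ac)
  finally have off: "(\<Sum>j\<in>{..<K} - {i}. N (blk S P' P' i j))
      < 1 / N (mat_inv (blk B P P (Suc i) (Suc i))) - b (Suc i) 0 * a * b 0 (Suc i)" .
  show "invertible_mat (blk S P' P' i i) \<and>
      (\<Sum>j\<in>{..<nblocks P - 1} - {i}. N (blk S P' P' i j)) < 1 / N (mat_inv (blk S P' P' i i))"
    using diagonal_blk_schur_complement[OF i Bii _ off] K by (simp add: sum_nonneg N_nonneg)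
qed

lemma block_diag_dominant_schur_complement:
  "block_diag_dominant N B P \<Longrightarrow> block_diag_dominant N S P'"
  unfolding block_diag_dominant_def
  using block_col_dd_schur_complement block_row_dd_schur_complement by blast

lemma block_sum_norm_schur_complement_le:
  assumes "block_diag_dominant N B P"
  shows "block_sum_norm N S P' \<le> block_sum_norm N B P"
proof -
  obtain K where K: "nblocks P = Suc K" using nblocks_pos[OF P] not0_implies_Suc by blast
  have "block_sum_norm N S P' \<le> (\<Sum>i<K. \<Sum>j<K. b (Suc i) (Suc j) + b (Suc i) 0 * a * b 0 (Suc j))"
    unfolding block_sum_norm_def nblocks_tail_blocking K diff_Suc_1
    using K by (intro sum_mono norm_blk_schur_complement_le) auto
  also have "\<dots> \<le> (\<Sum>i<Suc K. \<Sum>j<Suc K. b i j)"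
    using assms pivot_column_bound pivot_row_bound K a_pos
    unfolding block_diag_dominant_def
    by (intro block_sum_after_elimination_le b_nonneg) (auto simp: less_imp_le)
  also have "\<dots> = block_sum_norm N B P" unfolding block_sum_norm_def K b_def ..
  finally show ?thesis .
qed

end

section \<open>Block strong nonsingularity and the growth factor\<close>

context submultiplicative_norm_family
begin

lemma block_diag_dominant_imp_pivot_elimination:
  "B \<in> carrier_mat m m \<Longrightarrow> partition_of P m \<Longrightarrow> block_diag_dominant N B P \<Longrightarrow>
    pivot_elimination N B P m"
  by unfold_locales (auto simp: norm_family submult block_diag_dominant_pivot_invertible)

lemma block_diag_dominant_lead:
  assumes I: "partition_of I n" and dd: "block_diag_dominant N A I" and k: "k \<le> nblocks I"
  shows "block_diag_dominant N (lead A (I ! k)) (take (Suc k) I)"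
proof -
  let ?T = "take (Suc k) I"
  have nb: "nblocks ?T = k" using k length_partition[OF I] by (simp add: nblocks_take)
  have blk_eq: "blk (lead A (I ! k)) ?T ?T i j = blk A I I i j" if "i < k" "j < k" for i j
    using blk_lead[OF I that k] .
  have fewer: "(\<Sum>l\<in>{..<k} - {i}. f l) \<le> (\<Sum>l\<in>{..<nblocks I} - {i}. f l)"
    if "\<And>l. 0 \<le> f l" for f :: "nat \<Rightarrow> real" and i
    using that k by (intro sum_mono2) auto
  have "block_col_dd N (lead A (I ! k)) ?T" if col: "block_col_dd N A I"
    unfolding block_col_dd_def nb
  proof (intro allI impI)
    fix j assume j: "j < k"
    have A_j: "invertible_mat (blk A I I j j)"
      "(\<Sum>i\<in>{..<nblocks I} - {j}. N (blk A I I i j)) < 1 / N (mat_inv (blk A I I j j))"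
      using col j k unfolding block_col_dd_def by auto
    have "(\<Sum>i\<in>{..<k} - {j}. N (blk (lead A (I ! k)) ?T ?T i j)) = (\<Sum>i\<in>{..<k} - {j}. N (blk A I I i j))"
      using j by (intro sum.cong) (auto simp: blk_eq)
    also have "\<dots> \<le> (\<Sum>i\<in>{..<nblocks I} - {j}. N (blk A I I i j))" by (rule fewer N_nonneg)+
    also note A_j(2)
    finally show "invertible_mat (blk (lead A (I ! k)) ?T ?T j j) \<and>
        (\<Sum>i\<in>{..<k} - {j}. N (blk (lead A (I ! k)) ?T ?T i j)) < 1 / N (mat_inv (blk (lead A (I ! k)) ?T ?T j j))"
      using A_j(1) unfolding blk_eq[OF j j] by simp
  qed
  moreover have "block_row_dd N (lead A (I ! k)) ?T" if row: "block_row_dd N A I"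
    unfolding block_row_dd_def nb
  proof (intro allI impI)
    fix i assume i: "i < k"
    have A_i: "invertible_mat (blk A I I i i)"
      "(\<Sum>j\<in>{..<nblocks I} - {i}. N (blk A I I i j)) < 1 / N (mat_inv (blk A I I i i))"
      using row i k unfolding block_row_dd_def by auto
    have "(\<Sum>j\<in>{..<k} - {i}. N (blk (lead A (I ! k)) ?T ?T i j)) = (\<Sum>j\<in>{..<k} - {i}. N (blk A I I i j))"
      using i by (intro sum.cong) (auto simp: blk_eq)
    also have "\<dots> \<le> (\<Sum>j\<in>{..<nblocks I} - {i}. N (blk A I I i j))" by (rule fewer N_nonneg)+
    also note A_i(2)
    finally show "invertible_mat (blk (lead A (I ! k)) ?T ?T i i) \<and>
        (\<Sum>j\<in>{..<k} - {i}. N (blk (lead A (I ! k)) ?T ?T i j)) < 1 / N (mat_inv (blk (lead A (I ! k)) ?T ?T i i))"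
      using A_i(1) unfolding blk_eq[OF i i] by simp
  qed
  ultimately show ?thesis using dd unfolding block_diag_dominant_def by blast
qed

lemma block_diag_dominant_imp_invertible:
  "B \<in> carrier_mat m m \<Longrightarrow> partition_of P m \<Longrightarrow> block_diag_dominant N B P \<Longrightarrow> invertible_mat B"
proof (induction "nblocks P" arbitrary: B m P rule: less_induct)
  case less
  interpret pivot_elimination N B P m
    using less.prems by (rule block_diag_dominant_imp_pivot_elimination)
  show ?case
  proof (cases "nblocks P = 1")
    case True
    then show ?thesis using blk_single_block[OF P True B] pivot_invertible by simp
  next
    case False
    then have "2 \<le> nblocks P" using nblocks_pos[OF P] by simp
    have "P ! 1 \<le> m" using partition_of_nth_le[OF P] length_partition[OF P] \<open>2 \<le> nblocks P\<close> by simp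
    have "invertible_mat S"
      using less.hyps[of P' S "m - P ! 1"] \<open>2 \<le> nblocks P\<close> nblocks_tail_blocking[of P]
        schur_complement_carrier[OF B] partition_of_tail_blocking[OF P]
        block_diag_dominant_schur_complement less.prems(3) by simp
    then have "det S \<noteq> 0" using invertible_mat_iff_det schur_complement_carrier[OF B] by blast
    moreover have pivot: "invertible_mat (lead B (P ! 1))"
      using pivot_invertible blk_0_0_eq_lead[OF P, of B] by simp
    then have "det (lead B (P ! 1)) \<noteq> 0" using invertible_mat_iff_det[OF lead_carrier] by blast
    ultimately have "det B \<noteq> 0" using det_schur_complement[OF B \<open>P ! 1 \<le> m\<close> pivot] by simp
    then show ?thesis using invertible_mat_iff_det[OF B] by simp
  qed
qed

lemma schur_invariants:
  assumes A: "A \<in> carrier_mat n n" and I: "partition_of I n" and dd: "block_diag_dominant N A I"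
  shows "k < nblocks I \<Longrightarrow> schur A I k \<in> carrier_mat (n - I ! k) (n - I ! k)
    \<and> partition_of (shift_blocking I k) (n - I ! k)
    \<and> block_diag_dominant N (schur A I k) (shift_blocking I k)
    \<and> block_sum_norm N (schur A I k) (shift_blocking I k) \<le> block_sum_norm N A I"
proof (induction k)
  case 0
  then show ?case using A I dd by (simp add: shift_blocking_0 partition_of_nth_0)
next
  case (Suc k)
  then have k: "Suc k < length I" using length_partition[OF I] by simp
  note IH = Suc.IH[OF Suc_lessD[OF Suc.prems]]
  interpret pivot_elimination N "schur A I k" "shift_blocking I k" "n - I ! k"
    using IH by (intro block_diag_dominant_imp_pivot_elimination) auto
  have schur_eq: "schur A I (Suc k) = S"
    using schur_Suc shift_blocking_nth_1[OF k] by simp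
  have blocking_eq: "shift_blocking I (Suc k) = P'" by (rule shift_blocking_Suc[OF I k])
  have "I ! k \<le> I ! Suc k" "I ! Suc k \<le> n"
    using partition_of_mono[OF I] partition_of_nth_le[OF I] k by auto
  then have dim_eq: "n - I ! k - shift_blocking I k ! 1 = n - I ! Suc k"
    using shift_blocking_nth_1[OF k] by simp
  have "2 \<le> nblocks (shift_blocking I k)" using Suc.prems nblocks_shift_blocking by simp
  then show ?case
    unfolding schur_eq blocking_eq dim_eq[symmetric]
    using IH schur_complement_carrier[OF B] partition_of_tail_blocking[OF P]
      block_diag_dominant_schur_complement block_sum_norm_schur_complement_le by fastforce
qed

lemma block_sum_norm_pos:
  assumes P: "partition_of P m" and "invertible_mat (blk B P P 0 0)"
  shows "0 < block_sum_norm N B P"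
proof -
  have "0 < N (blk B P P 0 0)"
    using N_invertible_pos(1)[OF blk_carrier assms(2) block_size_pos[OF P nblocks_pos[OF P]]] .
  also have "\<dots> \<le> (\<Sum>j<nblocks P. N (blk B P P 0 j))"
    using nblocks_pos[OF P] by (intro member_le_sum N_nonneg) auto
  also have "\<dots> \<le> block_sum_norm N B P"
    unfolding block_sum_norm_def using nblocks_pos[OF P]
    by (intro member_le_sum[of 0 _ "\<lambda>i. \<Sum>j<nblocks P. N (blk B P P i j)"] sum_nonneg N_nonneg) auto
  finally show ?thesis .
qed

end

lemma growth_factor_eq_1:
  assumes I: "partition_of I n" and pos: "0 < block_sum_norm N A I"
    and le: "\<And>k. k < nblocks I \<Longrightarrow>
      block_sum_norm N (schur A I k) (shift_blocking I k) \<le> block_sum_norm N A I"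
  shows "growth_factor N A I = 1"
proof -
  let ?f = "\<lambda>k. block_sum_norm N (schur A I k) (shift_blocking I k)"
  have "?f 0 = block_sum_norm N A I" using shift_blocking_0[OF I] by simp
  then have "Max (?f ` {..<nblocks I}) = block_sum_norm N A I"
    using le nblocks_pos[OF I] by (intro Max_eqI) force+
  moreover have "{?f k | k. k < nblocks I} = ?f ` {..<nblocks I}" by auto
  ultimately show ?thesis using pos unfolding growth_factor_def by simp
qed

theorem mainTheorem12:
  fixes N :: "'a::real_normed_field mat \<Rightarrow> real"
    and A :: "'a mat" and I :: "nat list" and n :: nat
  assumes "mat_norm_family N"
    and "dimension_invariant N"
    and "submultiplicative N"
    and "A \<in> carrier_mat n n"
    and "partition_of I n"
    and "block_col_dd N A I \<or> block_row_dd N A I"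
  shows "block_strongly_nonsingular A I \<and> growth_factor N A I = 1"
proof -
  interpret submultiplicative_norm_family N using assms(1,3) by unfold_locales
  note A = assms(4) and I = assms(5)
  have dd: "block_diag_dominant N A I" using assms(6) unfolding block_diag_dominant_def .
  have "invertible_mat (lead A (I ! k))" if "k \<in> {1..nblocks I}" for k
    using that block_diag_dominant_imp_invertible[OF lead_carrier partition_of_take[OF I]
        block_diag_dominant_lead[OF I dd]] by simp
  moreover have "growth_factor N A I = 1"
    using growth_factor_eq_1[OF I] block_sum_norm_pos[OF I block_diag_dominant_pivot_invertible[OF I dd]]
      schur_invariants[OF A I dd] by blast
  ultimately show ?thesis unfolding block_strongly_nonsingular_def by blast
qed

end
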